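(* Let $(H,R)$ be a semiquasitriangular Hopf algebra with Drinfeld element $u=S(R^{(2)})R^{(1)}$, let $\mu:H\otimes H\to H$ be the multiplication, $T=\mu\circ\nu:H\to H$, and $\widetilde\nu:=(S\otimes S)\circ\nu\circ S^{-1}:H\to H\otimes H$. The following are equivalent: (1) $S(u)u\in\operatorname{Z}(H)$; (2) $S\circ T=T\circ S$; (3) $\mu\circ\nu=\mu\circ\widetilde\nu$.
   Context: All vector spaces are over a field $k$, $\otimes=\otimes_k$. For a Hopf algebra $H$ with comultiplication $\Delta$, counit $\epsilon$, antipode $S$, we use Sweedler notation $\Delta(h)=h_1\otimes h_2$, etc. $\operatorname{Z}(H)$ is the centre of $H$. For $R\in H\otimes H$ we write $R=R^{(1)}\otimes R^{(2)}$ (summation understood); $R'^{(1)}\otimes R'^{(2)}$ denotes another copy of $R$. Definition (semiquasitriangular Hopf algebra): a pair $(H,R)$ with $H$ a Hopf algebra with bijective antipode and $R\in H\otimes H$ invertible such that (1) $R^{(1)}_1\otimes R^{(1)}_2\otimes R^{(2)} = R^{(1)}\otimes R'^{(1)}\otimes R^{(2)}R'^{(2)}$; (2) $R^{(1)}\otimes R^{(2)}_1\otimes R^{(2)}_2 = R^{(1)}R'^{(1)}\otimes R'^{(2)}\otimes R^{(2)}$; (3) $R^{(1)}\otimes R^{(2)}_2R'^{(1)}\otimes R^{(2)}_1R'^{(2)} = R^{(1)}\otimes R'^{(1)}R^{(2)}_1\otimes R'^{(2)}R^{(2)}_2$; (4) $R^{(1)}_2R'^{(1)}\otimes R^{(1)}_1R'^{(2)}\otimes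 R^{(2)} = R'^{(1)}R^{(1)}_1\otimes R'^{(2)}R^{(1)}_2\otimes R^{(2)}$; (5) $\nu(h):=R^{(2)}h_2R'^{(2)}\otimes S(h_1)S(R^{(1)})h_3R'^{(1)}\in H\otimes\operatorname{Z}(H)$ for all $h\in H$; (6) $\nu(h)=R^{(1)}h_2R'^{(1)}\otimes S(R'^{(2)})S(h_1)R^{(2)}h_3$ for all $h\in H$. The map $\nu$ in the claim is the one defined in (5); thus $T(h)=R^{(2)}h_2R'^{(2)}S(h_1)S(R^{(1)})h_3R'^{(1)}$. *)

theory Defs
  imports Main "HOL.Vector_Spaces"
begin

text \<open>
  The ground field is a type 'k of class field; the Hopf algebra H is a
  type 'h of class ring_1 (associative unital ring) together with a scalar
  multiplication sc :: 'k => 'h => 'h making it a k-vector space and a k-algebra.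

  An element of H (x) H is represented by a finite formal sum
  sum_i a_i (x) b_i, i.e. a list of pairs; similarly H (x) H (x) H by lists of triples.
  Two formal sums denote the same tensor iff every bilinear (resp. trilinear)
  functional into k takes the same value on them.  Since linear functionals on
  H (x) H are exactly bilinear forms on H x H, and functionals on a vector space
  separate points, this is precisely equality in the tensor product.
\<close>

definition bilin :: "('k::field \<Rightarrow> 'h::ab_group_add \<Rightarrow> 'h) \<Rightarrow> ('h \<Rightarrow> 'h \<Rightarrow> 'k) \<Rightarrow> bool" where
  "bilin sc f \<longleftrightarrow> (\<forall>y. Vector_Spaces.linear sc (*) (\<lambda>x. f x y)) \<and> (\<forall>x. Vector_Spaces.linear sc (*) (f x))"

definition trilin :: "('k::field \<Rightarrow> 'h::ab_group_add \<Rightarrow> 'h) \<Rightarrow> ('h \<Rightarrow> 'h \<Rightarrow> 'h \<Rightarrow> 'k) \<Rightarrow> bool" where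
  "trilin sc f \<longleftrightarrow> (\<forall>y z. Vector_Spaces.linear sc (*) (\<lambda>x. f x y z))
      \<and> (\<forall>x z. Vector_Spaces.linear sc (*) (\<lambda>y. f x y z))
      \<and> (\<forall>x y. Vector_Spaces.linear sc (*) (f x y))"

definition teq2 :: "('k::field \<Rightarrow> 'h::ab_group_add \<Rightarrow> 'h) \<Rightarrow> ('h \<times> 'h) list \<Rightarrow> ('h \<times> 'h) list \<Rightarrow> bool" where
  "teq2 sc xs ys \<longleftrightarrow> (\<forall>f. bilin sc f \<longrightarrow>
     sum_list (map (\<lambda>(a, b). f a b) xs) = sum_list (map (\<lambda>(a, b). f a b) ys))"

definition teq3 :: "('k::field \<Rightarrow> 'h::ab_group_add \<Rightarrow> 'h) \<Rightarrow> ('h \<times> 'h \<times> 'h) list \<Rightarrow> ('h \<times> 'h \<times> 'h) list \<Rightarrow> bool" where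
  "teq3 sc xs ys \<longleftrightarrow> (\<forall>f. trilin sc f \<longrightarrow>
     sum_list (map (\<lambda>(a, b, c). f a b c) xs) = sum_list (map (\<lambda>(a, b, c). f a b c) ys))"

definition tmult2 :: "('h::ring_1 \<times> 'h) list \<Rightarrow> ('h \<times> 'h) list \<Rightarrow> ('h \<times> 'h) list" where
  "tmult2 xs ys = [(a * c, b * d). (a, b) \<leftarrow> xs, (c, d) \<leftarrow> ys]"

definition center :: "'h::ring_1 set" where
  "center = {z. \<forall>x. z * x = x * z}"

definition in_H_ZH :: "('k::field \<Rightarrow> 'h::ring_1 \<Rightarrow> 'h) \<Rightarrow> ('h \<times> 'h) list \<Rightarrow> bool" where
  "in_H_ZH sc xs \<longleftrightarrow> (\<exists>ys. teq2 sc xs ys \<and> (\<forall>(a, z) \<in> set ys. z \<in> center))"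

definition k_algebra :: "('k::field \<Rightarrow> 'h::ring_1 \<Rightarrow> 'h) \<Rightarrow> bool" where
  "k_algebra sc \<longleftrightarrow> vector_space sc \<and>
     (\<forall>c x y. sc c (x * y) = sc c x * y \<and> sc c (x * y) = x * sc c y)"

definition Delta2 :: "('h \<Rightarrow> ('h \<times> 'h) list) \<Rightarrow> 'h \<Rightarrow> ('h \<times> 'h \<times> 'h) list" where
  "Delta2 \<Delta> h = [(h1, h2, h3). (x, h3) \<leftarrow> \<Delta> h, (h1, h2) \<leftarrow> \<Delta> x]"

definition hopf_algebra ::
  "('k::field \<Rightarrow> 'h::ring_1 \<Rightarrow> 'h) \<Rightarrow> ('h \<Rightarrow> ('h \<times> 'h) list) \<Rightarrow> ('h \<Rightarrow> 'k) \<Rightarrow> ('h \<Rightarrow> 'h) \<Rightarrow> bool" where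
  "hopf_algebra sc \<Delta> \<epsilon> S \<longleftrightarrow>
     k_algebra sc \<and>
     \<comment> \<open>\<Delta> is a linear map H \<rightarrow> H (x) H\<close>
     (\<forall>x y. teq2 sc (\<Delta> (x + y)) (\<Delta> x @ \<Delta> y)) \<and>
     (\<forall>c x. teq2 sc (\<Delta> (sc c x)) (map (\<lambda>(a, b). (sc c a, b)) (\<Delta> x))) \<and>
     \<comment> \<open>coassociativity\<close>
     (\<forall>h. teq3 sc [(h1, h2, b). (a, b) \<leftarrow> \<Delta> h, (h1, h2) \<leftarrow> \<Delta> a]
                   [(a, b1, b2). (a, b) \<leftarrow> \<Delta> h, (b1, b2) \<leftarrow> \<Delta> b]) \<and>
     \<comment> \<open>counit\<close>
     Vector_Spaces.linear sc (*) \<epsilon> \<and>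
     (\<forall>h. sum_list (map (\<lambda>(a, b). sc (\<epsilon> a) b) (\<Delta> h)) = h) \<and>
     (\<forall>h. sum_list (map (\<lambda>(a, b). sc (\<epsilon> b) a) (\<Delta> h)) = h) \<and>
     \<comment> \<open>\<Delta> and \<epsilon> are algebra maps\<close>
     (\<forall>x y. teq2 sc (\<Delta> (x * y)) (tmult2 (\<Delta> x) (\<Delta> y))) \<and>
     teq2 sc (\<Delta> 1) [(1, 1)] \<and>
     (\<forall>x y. \<epsilon> (x * y) = \<epsilon> x * \<epsilon> y) \<and> \<epsilon> 1 = 1 \<and>
     \<comment> \<open>antipode, assumed bijective\<close>
     Vector_Spaces.linear sc sc S \<and>
     (\<forall>h. sum_list (map (\<lambda>(a, b). S a * b) (\<Delta> h)) = sc (\<epsilon> h) 1) \<and>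
     (\<forall>h. sum_list (map (\<lambda>(a, b). a * S b) (\<Delta> h)) = sc (\<epsilon> h) 1) \<and>
     bij S"

definition nu :: "('h \<Rightarrow> ('h \<times> 'h) list) \<Rightarrow> ('h::ring_1 \<Rightarrow> 'h) \<Rightarrow> ('h \<times> 'h) list \<Rightarrow> 'h \<Rightarrow> ('h \<times> 'h) list" where
  "nu \<Delta> S R h = [(b * h2 * d, S h1 * S a * h3 * c). (a, b) \<leftarrow> R, (h1, h2, h3) \<leftarrow> Delta2 \<Delta> h, (c, d) \<leftarrow> R]"

definition mu :: "('h::ring_1 \<times> 'h) list \<Rightarrow> 'h" where
  "mu xs = sum_list (map (\<lambda>(a, b). a * b) xs)"

definition SS :: "('h \<Rightarrow> 'h) \<Rightarrow> ('h \<times> 'h) list \<Rightarrow> ('h \<times> 'h) list" where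
  "SS S xs = map (\<lambda>(a, b). (S a, S b)) xs"

definition semiquasitriangular ::
  "('k::field \<Rightarrow> 'h::ring_1 \<Rightarrow> 'h) \<Rightarrow> ('h \<Rightarrow> ('h \<times> 'h) list) \<Rightarrow> ('h \<Rightarrow> 'k) \<Rightarrow> ('h \<Rightarrow> 'h)
     \<Rightarrow> ('h \<times> 'h) list \<Rightarrow> bool" where
  "semiquasitriangular sc \<Delta> \<epsilon> S R \<longleftrightarrow>
     hopf_algebra sc \<Delta> \<epsilon> S \<and>
     \<comment> \<open>R invertible in H (x) H\<close>
     (\<exists>R'. teq2 sc (tmult2 R R') [(1, 1)] \<and> teq2 sc (tmult2 R' R) [(1, 1)]) \<and>
     \<comment> \<open>(1)\<close>
     teq3 sc [(a1, a2, b). (a, b) \<leftarrow> R, (a1, a2) \<leftarrow> \<Delta> a]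
             [(a, c, b * d). (a, b) \<leftarrow> R, (c, d) \<leftarrow> R] \<and>
     \<comment> \<open>(2)\<close>
     teq3 sc [(a, b1, b2). (a, b) \<leftarrow> R, (b1, b2) \<leftarrow> \<Delta> b]
             [(a * c, d, b). (a, b) \<leftarrow> R, (c, d) \<leftarrow> R] \<and>
     \<comment> \<open>(3)\<close>
     teq3 sc [(a, b2 * c, b1 * d). (a, b) \<leftarrow> R, (b1, b2) \<leftarrow> \<Delta> b, (c, d) \<leftarrow> R]
             [(a, c * b1, d * b2). (a, b) \<leftarrow> R, (b1, b2) \<leftarrow> \<Delta> b, (c, d) \<leftarrow> R] \<and>
     \<comment> \<open>(4)\<close>
     teq3 sc [(a2 * c, a1 * d, b). (a, b) \<leftarrow> R, (a1, a2) \<leftarrow> \<Delta> a, (c, d) \<leftarrow> R]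
             [(c * a1, d * a2, b). (a, b) \<leftarrow> R, (a1, a2) \<leftarrow> \<Delta> a, (c, d) \<leftarrow> R] \<and>
     \<comment> \<open>(5)\<close>
     (\<forall>h. in_H_ZH sc (nu \<Delta> S R h)) \<and>
     \<comment> \<open>(6)\<close>
     (\<forall>h. teq2 sc (nu \<Delta> S R h)
        [(a * h2 * c, S d * S h1 * b * h3). (a, b) \<leftarrow> R, (h1, h2, h3) \<leftarrow> Delta2 \<Delta> h, (c, d) \<leftarrow> R])"

definition drinfeld_u :: "('h::ring_1 \<Rightarrow> 'h) \<Rightarrow> ('h \<times> 'h) list \<Rightarrow> 'h" where
  "drinfeld_u S R = sum_list (map (\<lambda>(a, b). S b * a) R)"

end

theory Submission
  imports Defs
begin

text \<open>
  Conditions (1), (2), (6) and the centrality in (5) show that the Drinfeld element u is a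
  unit with u T(h) = S^2(h) u, so T is conjugation of S^2 by u.  Then
  S(T g) = S(u) S^3(g) S(u)^-1 and T(S g) = u^-1 S^3(g) u; as S^3 is onto, S and T commute
  iff u S(u), or equivalently its conjugate S(u) u, is central.  Centrality of the second
  tensor factor of \<nu>(h) also lets one flip the factors under \<mu>, so that
  \<mu> \<circ> \<nu>~ = S \<circ> T \<circ> S^-1, which equals T iff S and T commute.
\<close>

lemma eq_if_linear_functionals_eq:
  fixes sc :: "'k::field \<Rightarrow> 'h::ab_group_add \<Rightarrow> 'h"
  assumes "vector_space sc"
    and "\<And>\<phi>. Vector_Spaces.linear sc (*) \<phi> \<Longrightarrow> \<phi> x = \<phi> y"
  shows "x = y"
proof (rule ccontr)
  assume "x \<noteq> y"
  interpret vector_space_pair sc "(*) :: 'k \<Rightarrow> 'k \<Rightarrow> 'k"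
    by unfold_locales (auto simp: assms(1) vector_space.vector_space_assms algebra_simps)
  have indep: "vs1.independent {x - y}"
    using \<open>x \<noteq> y\<close> by simp
  let ?\<phi> = "construct {x - y} (\<lambda>_. 1)"
  have lin: "Vector_Spaces.linear sc (*) ?\<phi>"
    by (rule linear_construct[OF indep])
  have "?\<phi> (x - y) = 1"
    by (rule construct_basis[OF indep]) simp
  moreover have "?\<phi> (x - y) = ?\<phi> x - ?\<phi> y"
    using lin by (simp add: module_hom.diff linear_iff_module_hom)
  ultimately show False
    using assms(2)[OF lin] by simp
qed

lemma sum_list_concat: "sum_list (concat xss) = sum_list (map sum_list xss)"
  by (induct xss) auto

lemma sum_list_swap:
  "(\<Sum>x\<leftarrow>xs. \<Sum>y\<leftarrow>ys. f x y) = (\<Sum>y\<leftarrow>ys. \<Sum>x\<leftarrow>xs. (f x y :: 'a::comm_monoid_add))"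
  by (induct xs) (auto simp: sum_list_addf)

lemmas sum_list_distrib_left = sum_list_const_mult[symmetric]
lemmas sum_list_distrib_right = sum_list_mult_const[symmetric]

lemma sum_list_cong: "(\<And>x. x \<in> set xs \<Longrightarrow> f x = g x) \<Longrightarrow> (\<Sum>x\<leftarrow>xs. f x) = (\<Sum>x\<leftarrow>xs. g x)"
  by (metis map_cong)

lemma linear_sum_list:
  assumes "Vector_Spaces.linear s1 s2 f"
  shows "f (\<Sum>x\<leftarrow>xs. g x) = (\<Sum>x\<leftarrow>xs. f (g x))"
proof -
  from assms have add: "\<And>x y. f (x + y) = f x + f y"
    by (auto simp: linear_iff)
  then have "f 0 = 0"
    by (metis add_cancel_right_right add_0)
  then show ?thesis
    by (induct xs) (auto simp: add)
qed

lemma center_commute: "z \<in> center \<Longrightarrow> z * y = y * z"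
  by (simp add: center_def)

lemma unit_mult_center_commute:
  fixes u v w :: "'a::ring_1"
  assumes uv: "u * v = 1" and vu: "v * u = 1"
  shows "u * w \<in> center \<longleftrightarrow> w * u \<in> center"
proof
  assume c: "u * w \<in> center"
  have "w * u = v * (u * w) * u"
    by (simp add: mult.assoc[symmetric] vu)
  also have "\<dots> = u * w * v * u"
    using c by (simp add: center_def)
  also have "\<dots> = u * w"
    by (simp add: mult.assoc vu)
  finally show "w * u \<in> center"
    using c by simp
next
  assume c: "w * u \<in> center"
  have "u * w = u * (w * u) * v"
    by (simp add: mult.assoc uv)
  also have "\<dots> = w * u * u * v"
    using c by (simp add: center_def mult.assoc)
  also have "\<dots> = w * u"
    by (simp add: mult.assoc uv)
  finally show "u * w \<in> center"
    using c by simp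
qed

lemma conj_eq_conj_iff_center:
  fixes u v a b :: "'a::ring_1"
  assumes uv: "u * v = 1" and vu: "v * u = 1" and ab: "a * b = 1" and ba: "b * a = 1"
  shows "(\<forall>x. a * x * b = v * x * u) \<longleftrightarrow> u * a \<in> center"
proof -
  have cancel: "p = q \<longleftrightarrow> u * p * a = u * q * a" for p q
  proof
    assume "u * p * a = u * q * a"
    then have "v * (u * p * a) * b = v * (u * q * a) * b"
      by simp
    then show "p = q"
      by (simp add: mult.assoc[symmetric] vu) (simp add: mult.assoc ab)
  qed simp
  have "a * x * b = v * x * u \<longleftrightarrow> u * a * x = x * (u * a)" for x
    using cancel[of "a * x * b" "v * x * u"]
    by (simp add: mult.assoc ba) (simp add: mult.assoc[symmetric] uv)
  then show ?thesis
    by (simp add: center_def)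
qed

lemma antimult_commute_conj_iff_center:
  fixes S :: "'a::ring_1 \<Rightarrow> 'a"
  assumes "surj S" and S_mult: "\<And>x y. S (x * y) = S y * S x" and S_one: "S 1 = 1"
    and uv: "u * v = 1" and vu: "v * u = 1"
  shows "S \<circ> (\<lambda>h. v * S (S h) * u) = (\<lambda>h. v * S (S h) * u) \<circ> S \<longleftrightarrow> S u * u \<in> center"
proof -
  have Su_Sv: "S u * S v = 1" and Sv_Su: "S v * S u = 1"
    using arg_cong[OF vu, of S] arg_cong[OF uv, of S] by (simp_all add: S_mult S_one)
  have "surj (\<lambda>g. S (S (S g)))"
    using \<open>surj S\<close> comp_surj[of S S] comp_surj[of "S \<circ> S" S] by (simp add: comp_def)
  then have surj_S3: "(\<forall>g. P (S (S (S g)))) \<longleftrightarrow> (\<forall>x. P x)" for P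
    by (metis surjD)
  have "S \<circ> (\<lambda>h. v * S (S h) * u) = (\<lambda>h. v * S (S h) * u) \<circ> S
      \<longleftrightarrow> (\<forall>g. S u * S (S (S g)) * S v = v * S (S (S g)) * u)"
    by (simp add: fun_eq_iff S_mult mult.assoc)
  also have "\<dots> \<longleftrightarrow> (\<forall>x. S u * x * S v = v * x * u)"
    by (rule surj_S3)
  also have "\<dots> \<longleftrightarrow> u * S u \<in> center"
    by (rule conj_eq_conj_iff_center[OF uv vu Su_Sv Sv_Su])
  also have "\<dots> \<longleftrightarrow> S u * u \<in> center"
    by (rule unit_mult_center_commute[OF uv vu])
  finally show ?thesis .
qed

lemma commute_iff_eq_conj:
  assumes "bij S"
  shows "S \<circ> T = T \<circ> S \<longleftrightarrow> T = (\<lambda>h. S (T (inv S h)))"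
proof
  assume "S \<circ> T = T \<circ> S"
  then show "T = (\<lambda>h. S (T (inv S h)))"
    using assms by (auto simp: fun_eq_iff bij_is_surj surj_f_inv_f dest: fun_cong[of _ _ "inv S _"])
next
  assume "T = (\<lambda>h. S (T (inv S h)))"
  then show "S \<circ> T = T \<circ> S"
    using assms by (metis bij_is_inj comp_apply fun_eq_iff inv_f_f)
qed

locale semiquasitriangular_hopf =
  fixes sc :: "'k::field \<Rightarrow> 'h::ring_1 \<Rightarrow> 'h"
    and \<Delta> :: "'h \<Rightarrow> ('h \<times> 'h) list"
    and \<epsilon> :: "'h \<Rightarrow> 'k"
    and S :: "'h \<Rightarrow> 'h"
    and R :: "('h \<times> 'h) list"
  assumes semiquasitriangular: "semiquasitriangular sc \<Delta> \<epsilon> S R"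
begin

abbreviation lin :: "('h \<Rightarrow> 'h) \<Rightarrow> bool" where
  "lin f \<equiv> Vector_Spaces.linear sc sc f"

lemma hopf_algebra: "hopf_algebra sc \<Delta> \<epsilon> S"
  using semiquasitriangular by (simp add: semiquasitriangular_def)

lemma vector_space_sc: "vector_space sc"
  using hopf_algebra by (simp add: hopf_algebra_def k_algebra_def)

lemma scale_mult_left: "sc c x * y = sc c (x * y)"
  and scale_mult_right: "x * sc c y = sc c (x * y)"
  using hopf_algebra unfolding hopf_algebra_def k_algebra_def by metis+

lemma scale_add_right: "sc a (x + y) = sc a x + sc a y"
  and scale_add_left: "sc (a + b) x = sc a x + sc b x"
  and scale_scale: "sc a (sc b x) = sc (a * b) x"
  and scale_one: "sc 1 x = x"
  using vector_space_sc by (auto simp: vector_space_def)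

lemma scale_zero_right: "sc a 0 = 0"
  using vector_space_sc by (simp add: module_iff_vector_space[symmetric] module.scale_zero_right)

lemma scale_sum_list: "sc c (\<Sum>x\<leftarrow>xs. f x) = (\<Sum>x\<leftarrow>xs. sc c (f x))"
  by (induct xs) (auto simp: scale_add_right scale_zero_right)

lemma linear_counit: "Vector_Spaces.linear sc (*) \<epsilon>"
  and lin_S: "lin S"
  and counit_left: "(\<Sum>p\<leftarrow>\<Delta> h. sc (\<epsilon> (fst p)) (snd p)) = h"
  and counit_right: "(\<Sum>p\<leftarrow>\<Delta> h. sc (\<epsilon> (snd p)) (fst p)) = h"
  and antipode_left: "(\<Sum>p\<leftarrow>\<Delta> h. S (fst p) * snd p) = sc (\<epsilon> h) 1"
  and antipode_right: "(\<Sum>p\<leftarrow>\<Delta> h. fst p * S (snd p)) = sc (\<epsilon> h) 1"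
  and counit_mult: "\<epsilon> (x * y) = \<epsilon> x * \<epsilon> y"
  and counit_one: "\<epsilon> 1 = 1"
  and bij_S: "bij S"
  and comult_add: "teq2 sc (\<Delta> (x + y)) (\<Delta> x @ \<Delta> y)"
  and comult_scale: "teq2 sc (\<Delta> (sc c x)) (map (\<lambda>(a, b). (sc c a, b)) (\<Delta> x))"
  and comult_mult: "teq2 sc (\<Delta> (x * y)) (tmult2 (\<Delta> x) (\<Delta> y))"
  and comult_one: "teq2 sc (\<Delta> 1) [(1, 1)]"
  and coassoc: "teq3 sc [(h1, h2, b). (a, b) \<leftarrow> \<Delta> h, (h1, h2) \<leftarrow> \<Delta> a]
                        [(a, b1, b2). (a, b) \<leftarrow> \<Delta> h, (b1, b2) \<leftarrow> \<Delta> b]"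
  using hopf_algebra unfolding hopf_algebra_def case_prod_beta by blast+

lemma counit_add: "\<epsilon> (x + y) = \<epsilon> x + \<epsilon> y"
  and counit_scale: "\<epsilon> (sc c x) = c * \<epsilon> x"
  using linear_counit by (auto simp: linear_iff)

lemma S_add: "S (x + y) = S x + S y"
  and S_scale: "S (sc c x) = sc c (S x)"
  using lin_S by (auto simp: linear_iff)

lemma S_sum_list: "S (\<Sum>x\<leftarrow>xs. f x) = (\<Sum>x\<leftarrow>xs. S (f x))"
  by (rule linear_sum_list[OF lin_S])

lemma lin_scaleD: "lin f \<Longrightarrow> f (sc c x) = sc c (f x)"
  by (auto simp: linear_iff)

lemma lin_id: "lin (\<lambda>x. x)"
  using vector_space_sc by (simp add: linear_iff)

lemma lin_mult_left: "lin f \<Longrightarrow> lin (\<lambda>x. a * f x)"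
  using vector_space_sc by (simp add: linear_iff algebra_simps scale_mult_right)

lemma lin_mult_right: "lin f \<Longrightarrow> lin (\<lambda>x. f x * a)"
  using vector_space_sc by (simp add: linear_iff algebra_simps scale_mult_left)

lemma lin_add: "lin f \<Longrightarrow> lin g \<Longrightarrow> lin (\<lambda>x. f x + g x)"
  using vector_space_sc by (simp add: linear_iff algebra_simps scale_add_right)

lemma lin_scale: "lin f \<Longrightarrow> lin (\<lambda>x. sc c (f x))"
  using vector_space_sc by (simp add: linear_iff scale_add_right scale_scale mult.commute)

lemma lin_comp: "lin f \<Longrightarrow> lin g \<Longrightarrow> lin (\<lambda>x. f (g x))"
  using Vector_Spaces.linear_compose[of sc sc g sc f] by (simp add: comp_def)

lemma lin_sum_list: "(\<And>p. lin (\<lambda>x. F p x)) \<Longrightarrow> lin (\<lambda>x. \<Sum>p\<leftarrow>xs. F p x)"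
proof (induct xs)
  case Nil
  then show ?case
    using vector_space_sc by (simp add: linear_iff scale_zero_right)
next
  case (Cons a xs)
  then show ?case
    by (simp add: lin_add)
qed

lemma lin_S_comp: "lin f \<Longrightarrow> lin (\<lambda>x. S (f x))"
  by (rule lin_comp[OF lin_S])

lemma lin_counit_scale: "lin f \<Longrightarrow> lin (\<lambda>x. sc (\<epsilon> (f x)) c)"
  using vector_space_sc linear_counit
  by (simp add: linear_iff counit_add counit_scale scale_add_left scale_scale)

lemmas lin_intros =
  lin_id lin_mult_left lin_mult_right lin_add lin_scale lin_sum_list lin_S_comp lin_counit_scale

definition bilinear_map :: "('h \<Rightarrow> 'h \<Rightarrow> 'h) \<Rightarrow> bool" where
  "bilinear_map g \<longleftrightarrow> (\<forall>y. lin (\<lambda>x. g x y)) \<and> (\<forall>x. lin (\<lambda>y. g x y))"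

definition trilinear_map :: "('h \<Rightarrow> 'h \<Rightarrow> 'h \<Rightarrow> 'h) \<Rightarrow> bool" where
  "trilinear_map g \<longleftrightarrow>
     (\<forall>y z. lin (\<lambda>x. g x y z)) \<and> (\<forall>x z. lin (\<lambda>y. g x y z)) \<and> (\<forall>x y. lin (\<lambda>z. g x y z))"

text \<open>
  Equal tensors may be evaluated by any (bi/tri)linear map into H, not only into k:
  compose with all linear functionals on H, which separate points.
\<close>

lemma teq2_sum_eq:
  assumes eq: "teq2 sc xs ys" and g: "bilinear_map g"
  shows "(\<Sum>p\<leftarrow>xs. g (fst p) (snd p)) = (\<Sum>p\<leftarrow>ys. g (fst p) (snd p))"
proof (rule eq_if_linear_functionals_eq[OF vector_space_sc])
  fix \<phi> assume \<phi>: "Vector_Spaces.linear sc (*) \<phi>"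
  have "bilin sc (\<lambda>a b. \<phi> (g a b))"
    using g \<phi> unfolding bilinear_map_def bilin_def
    by (auto intro: Vector_Spaces.linear_compose[of sc sc _ "(*)" \<phi>, unfolded comp_def])
  then show "\<phi> (\<Sum>p\<leftarrow>xs. g (fst p) (snd p)) = \<phi> (\<Sum>p\<leftarrow>ys. g (fst p) (snd p))"
    using eq unfolding linear_sum_list[OF \<phi>] teq2_def case_prod_beta' by blast
qed

lemma teq3_sum_eq:
  assumes eq: "teq3 sc xs ys" and g: "trilinear_map g"
  shows "(\<Sum>p\<leftarrow>xs. g (fst p) (fst (snd p)) (snd (snd p)))
       = (\<Sum>p\<leftarrow>ys. g (fst p) (fst (snd p)) (snd (snd p)))"
proof (rule eq_if_linear_functionals_eq[OF vector_space_sc])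
  fix \<phi> assume \<phi>: "Vector_Spaces.linear sc (*) \<phi>"
  have "trilin sc (\<lambda>a b c. \<phi> (g a b c))"
    using g \<phi> unfolding trilinear_map_def trilin_def
    by (auto intro: Vector_Spaces.linear_compose[of sc sc _ "(*)" \<phi>, unfolded comp_def])
  then show "\<phi> (\<Sum>p\<leftarrow>xs. g (fst p) (fst (snd p)) (snd (snd p)))
           = \<phi> (\<Sum>p\<leftarrow>ys. g (fst p) (fst (snd p)) (snd (snd p)))"
    using eq unfolding linear_sum_list[OF \<phi>] teq3_def case_prod_beta' by blast
qed

lemma bilinear_map_lin_left: "bilinear_map g \<Longrightarrow> lin f \<Longrightarrow> lin (\<lambda>x. g (f x) b)"
  unfolding bilinear_map_def using lin_comp[of "\<lambda>x. g x b" f] by auto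

lemma bilinear_map_lin_right: "bilinear_map g \<Longrightarrow> lin f \<Longrightarrow> lin (\<lambda>x. g a (f x))"
  unfolding bilinear_map_def using lin_comp[of "g a" f] by auto

lemma lin_comult_sum:
  assumes lin1: "\<And>b. lin (\<lambda>a. F (a, b))" and lin2: "\<And>a. lin (\<lambda>b. F (a, b))"
  shows "lin (\<lambda>x. \<Sum>p\<leftarrow>\<Delta> x. F p)"
proof -
  have F: "bilinear_map (\<lambda>a b. F (a, b))"
    using lin1 lin2 by (simp add: bilinear_map_def)
  have "(\<Sum>p\<leftarrow>\<Delta> (x + y). F p) = (\<Sum>p\<leftarrow>\<Delta> x. F p) + (\<Sum>p\<leftarrow>\<Delta> y. F p)" for x y
    using teq2_sum_eq[OF comult_add F] by simp
  moreover have "(\<Sum>p\<leftarrow>\<Delta> (sc c x). F p) = sc c (\<Sum>p\<leftarrow>\<Delta> x. F p)" for c x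
    using teq2_sum_eq[OF comult_scale F] lin_scaleD[OF lin1]
    by (simp add: case_prod_beta' comp_def scale_sum_list)
  ultimately show ?thesis
    using vector_space_sc by (simp add: linear_iff)
qed

lemmas lin_comult_intros = lin_intros lin_comult_sum

lemma coassoc_sum:
  assumes "trilinear_map G"
  shows "(\<Sum>p\<leftarrow>\<Delta> h. \<Sum>q\<leftarrow>\<Delta> (fst p). G (fst q) (snd q) (snd p))
       = (\<Sum>p\<leftarrow>\<Delta> h. \<Sum>q\<leftarrow>\<Delta> (snd p). G (fst p) (fst q) (snd q))"
  using teq3_sum_eq[OF coassoc assms] by (simp add: map_concat sum_list_concat comp_def split_def)

lemma comult_mult_sum:
  assumes "bilinear_map g"
  shows "(\<Sum>p\<leftarrow>\<Delta> (x * y). g (fst p) (snd p))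
       = (\<Sum>p\<leftarrow>\<Delta> x. \<Sum>q\<leftarrow>\<Delta> y. g (fst p * fst q) (snd p * snd q))"
  using teq2_sum_eq[OF comult_mult assms]
  by (simp add: tmult2_def map_concat sum_list_concat comp_def split_def)

lemma comult_one_sum:
  assumes "bilinear_map g"
  shows "(\<Sum>p\<leftarrow>\<Delta> 1. g (fst p) (snd p)) = g 1 1"
  using teq2_sum_eq[OF comult_one assms] by simp

lemma S_one: "S 1 = 1"
proof -
  have "(\<Sum>p\<leftarrow>\<Delta> 1. S (fst p) * snd p) = S 1 * 1"
    by (rule comult_one_sum) (simp add: bilinear_map_def; intro allI conjI lin_intros)
  then show ?thesis
    using antipode_left[of 1] by (simp add: counit_one scale_one)
qed

lemma antipode_left_mult:
  "(\<Sum>p\<leftarrow>\<Delta> x. \<Sum>q\<leftarrow>\<Delta> y. S (fst p * fst q) * (snd p * snd q)) = sc (\<epsilon> x * \<epsilon> y) 1"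
proof -
  have "(\<Sum>p\<leftarrow>\<Delta> (x * y). S (fst p) * snd p)
      = (\<Sum>p\<leftarrow>\<Delta> x. \<Sum>q\<leftarrow>\<Delta> y. S (fst p * fst q) * (snd p * snd q))"
    by (rule comult_mult_sum) (simp add: bilinear_map_def; intro allI conjI lin_intros)
  then show ?thesis
    using antipode_left[of "x * y"] by (simp add: counit_mult)
qed

lemma antipode_right_mult:
  "(\<Sum>p\<leftarrow>\<Delta> x. \<Sum>q\<leftarrow>\<Delta> y. (fst p * fst q) * (S (snd q) * S (snd p))) = sc (\<epsilon> x * \<epsilon> y) 1"
proof -
  have "(\<Sum>p\<leftarrow>\<Delta> x. \<Sum>q\<leftarrow>\<Delta> y. (fst p * fst q) * (S (snd q) * S (snd p)))
      = (\<Sum>p\<leftarrow>\<Delta> x. fst p * (\<Sum>q\<leftarrow>\<Delta> y. fst q * S (snd q)) * S (snd p))"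
    by (simp add: sum_list_distrib_left sum_list_distrib_right mult.assoc)
  also have "\<dots> = (\<Sum>p\<leftarrow>\<Delta> x. sc (\<epsilon> y) (fst p * S (snd p)))"
    by (simp add: antipode_right scale_mult_left scale_mult_right)
  also have "\<dots> = sc (\<epsilon> y) (sc (\<epsilon> x) 1)"
    by (simp add: antipode_right scale_sum_list[symmetric])
  finally show ?thesis
    by (simp add: scale_scale mult.commute)
qed

text \<open>
  Both S(x y) and S(y) S(x) are convolution inverses of the multiplication of H, regarded
  as a map on H \<otimes> H, hence equal.
\<close>

lemma S_mult: "S (x * y) = S y * S x"
proof -
  let ?Gy = "\<lambda>a b c d e f. S (a * d) * (b * e) * (S f * S c)"
  let ?Gx = "\<lambda>a b c. \<Sum>q\<leftarrow>\<Delta> y. \<Sum>q'\<leftarrow>\<Delta> (fst q). ?Gy a b c (fst q') (snd q') (snd q)"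
  have Gx: "trilinear_map ?Gx"
    unfolding trilinear_map_def
    by (intro allI conjI; (intro lin_comult_intros | simp only: prod.sel)+)
  have Gy: "trilinear_map (?Gy a b c)" for a b c
    unfolding trilinear_map_def
    by (intro allI conjI; (intro lin_comult_intros | simp only: prod.sel)+)
  have "S y * S x
      = S (\<Sum>q\<leftarrow>\<Delta> y. sc (\<epsilon> (fst q)) (snd q)) * S (\<Sum>p\<leftarrow>\<Delta> x. sc (\<epsilon> (fst p)) (snd p))"
    by (simp add: counit_left)
  also have "\<dots> = (\<Sum>p\<leftarrow>\<Delta> x. \<Sum>q\<leftarrow>\<Delta> y. sc (\<epsilon> (fst p) * \<epsilon> (fst q)) 1 * (S (snd q) * S (snd p)))"
    by (simp add: sum_list_distrib_left sum_list_distrib_right scale_mult_left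
        scale_mult_right scale_scale S_sum_list S_scale scale_sum_list sum_list_swap[where ys="\<Delta> y"]
        mult.commute)
  also have "\<dots> = (\<Sum>p\<leftarrow>\<Delta> x. \<Sum>q\<leftarrow>\<Delta> y.
      (\<Sum>p'\<leftarrow>\<Delta> (fst p). \<Sum>q'\<leftarrow>\<Delta> (fst q). S (fst p' * fst q') * (snd p' * snd q'))
        * (S (snd q) * S (snd p)))"
    by (simp only: antipode_left_mult)
  also have "\<dots> = (\<Sum>p\<leftarrow>\<Delta> x. \<Sum>p'\<leftarrow>\<Delta> (fst p). ?Gx (fst p') (snd p') (snd p))"
    by (simp add: sum_list_distrib_right sum_list_swap[where ys="\<Delta> y"])
  also have "\<dots> = (\<Sum>p\<leftarrow>\<Delta> x. \<Sum>p'\<leftarrow>\<Delta> (snd p). ?Gx (fst p) (fst p') (snd p'))"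
    by (rule coassoc_sum[OF Gx])
  also have "\<dots> = (\<Sum>p\<leftarrow>\<Delta> x. \<Sum>p'\<leftarrow>\<Delta> (snd p). \<Sum>q\<leftarrow>\<Delta> y. \<Sum>q'\<leftarrow>\<Delta> (snd q).
      ?Gy (fst p) (fst p') (snd p') (fst q) (fst q') (snd q'))"
    by (simp only: coassoc_sum[OF Gy])
  also have "\<dots> = (\<Sum>p\<leftarrow>\<Delta> x. \<Sum>q\<leftarrow>\<Delta> y. S (fst p * fst q)
      * (\<Sum>p'\<leftarrow>\<Delta> (snd p). \<Sum>q'\<leftarrow>\<Delta> (snd q). (fst p' * fst q') * (S (snd q') * S (snd p'))))"
    by (simp add: sum_list_distrib_left sum_list_swap[where ys="\<Delta> y"] mult.assoc)
  also have "\<dots> = (\<Sum>p\<leftarrow>\<Delta> x. \<Sum>q\<leftarrow>\<Delta> y. S (fst p * fst q) * sc (\<epsilon> (snd p) * \<epsilon> (snd q)) 1)"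
    by (simp only: antipode_right_mult)
  also have "\<dots> = (\<Sum>p\<leftarrow>\<Delta> x. \<Sum>q\<leftarrow>\<Delta> y. S (sc (\<epsilon> (snd p)) (fst p) * sc (\<epsilon> (snd q)) (fst q)))"
    by (simp add: scale_mult_left scale_mult_right scale_scale S_scale mult.commute)
  also have "\<dots> = S ((\<Sum>p\<leftarrow>\<Delta> x. sc (\<epsilon> (snd p)) (fst p)) * (\<Sum>q\<leftarrow>\<Delta> y. sc (\<epsilon> (snd q)) (fst q)))"
    by (simp add: sum_list_distrib_left sum_list_distrib_right S_sum_list)
      (rule sum_list_swap)
  also have "\<dots> = S (x * y)"
    by (simp add: counit_right)
  finally show ?thesis ..
qed

lemma S_inv_S: "S (inv S x) = x"
  using bij_S by (simp add: surj_f_inv_f bij_is_surj)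

lemma inv_S_S: "inv S (S x) = x"
  using bij_S by (simp add: inv_f_f bij_is_inj)

lemma S_inject: "S x = S y \<longleftrightarrow> x = y"
  using bij_S by (meson bij_def injD)

lemma lin_inv_S: "lin (inv S)"
proof -
  have "inv S (x + y) = inv S x + inv S y" for x y
    by (simp add: S_inject[symmetric] S_inv_S S_add)
  moreover have "inv S (sc c x) = sc c (inv S x)" for c x
    by (simp add: S_inject[symmetric] S_inv_S S_scale)
  ultimately show ?thesis
    using vector_space_sc by (simp add: linear_iff)
qed

lemma antipode_inv_S: "(\<Sum>p\<leftarrow>\<Delta> h. snd p * inv S (fst p)) = sc (\<epsilon> h) 1"
  by (simp add: S_inject[symmetric] S_sum_list S_mult S_inv_S antipode_right S_scale S_one)

lemma R_invertible: "\<exists>R'. teq2 sc (tmult2 R R') [(1, 1)] \<and> teq2 sc (tmult2 R' R) [(1, 1)]"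
  and R_comult_left: "teq3 sc [(a1, a2, b). (a, b) \<leftarrow> R, (a1, a2) \<leftarrow> \<Delta> a]
                             [(a, c, b * d). (a, b) \<leftarrow> R, (c, d) \<leftarrow> R]"
  and R_comult_right: "teq3 sc [(a, b1, b2). (a, b) \<leftarrow> R, (b1, b2) \<leftarrow> \<Delta> b]
                              [(a * c, d, b). (a, b) \<leftarrow> R, (c, d) \<leftarrow> R]"
  and nu_central: "in_H_ZH sc (nu \<Delta> S R h)"
  and nu_alt: "teq2 sc (nu \<Delta> S R h)
        [(a * h2 * c, S d * S h1 * b * h3). (a, b) \<leftarrow> R, (h1, h2, h3) \<leftarrow> Delta2 \<Delta> h, (c, d) \<leftarrow> R]"
  using semiquasitriangular unfolding semiquasitriangular_def by blast+

lemma R_comult_left_sum: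
  assumes "trilinear_map G"
  shows "(\<Sum>p\<leftarrow>R. \<Sum>q\<leftarrow>\<Delta> (fst p). G (fst q) (snd q) (snd p))
       = (\<Sum>p\<leftarrow>R. \<Sum>q\<leftarrow>R. G (fst p) (fst q) (snd p * snd q))"
  using teq3_sum_eq[OF R_comult_left assms]
  by (simp add: map_concat sum_list_concat comp_def split_def)

lemma R_comult_right_sum:
  assumes "trilinear_map G"
  shows "(\<Sum>p\<leftarrow>R. \<Sum>q\<leftarrow>\<Delta> (snd p). G (fst p) (fst q) (snd q))
       = (\<Sum>p\<leftarrow>R. \<Sum>q\<leftarrow>R. G (fst p * fst q) (snd q) (snd p))"
  using teq3_sum_eq[OF R_comult_right assms]
  by (simp add: map_concat sum_list_concat comp_def split_def)

lemma tmult2_one_sum: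
  assumes "teq2 sc (tmult2 X Y) [(1, 1)]" and "bilinear_map g"
  shows "(\<Sum>p\<leftarrow>X. \<Sum>q\<leftarrow>Y. g (fst p * fst q) (snd p * snd q)) = g 1 1"
  using teq2_sum_eq[OF assms] by (simp add: tmult2_def map_concat sum_list_concat comp_def split_def)

lemma R_sum_absorb_right:
  assumes g: "bilinear_map g"
  shows "(\<Sum>p\<leftarrow>R. g (fst p) (snd p))
       = (\<Sum>p\<leftarrow>R. g (fst p * (\<Sum>q\<leftarrow>R. sc (\<epsilon> (snd q)) (fst q))) (snd p))"
proof -
  have G: "trilinear_map (\<lambda>a b c. g a (sc (\<epsilon> b) c))"
    unfolding trilinear_map_def
    by (intro allI conjI bilinear_map_lin_left[OF g] bilinear_map_lin_right[OF g] lin_intros)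
  have "(\<Sum>p\<leftarrow>R. g (fst p) (snd p))
      = (\<Sum>p\<leftarrow>R. g (fst p) (\<Sum>q\<leftarrow>\<Delta> (snd p). sc (\<epsilon> (fst q)) (snd q)))"
    by (simp add: counit_left)
  also have "\<dots> = (\<Sum>p\<leftarrow>R. \<Sum>q\<leftarrow>\<Delta> (snd p). g (fst p) (sc (\<epsilon> (fst q)) (snd q)))"
    by (simp add: linear_sum_list[OF bilinear_map_lin_right[OF g lin_id]])
  also have "\<dots> = (\<Sum>p\<leftarrow>R. \<Sum>q\<leftarrow>R. g (fst p * fst q) (sc (\<epsilon> (snd q)) (snd p)))"
    by (rule R_comult_right_sum[OF G])
  also have "\<dots> = (\<Sum>p\<leftarrow>R. \<Sum>q\<leftarrow>R. g (fst p * sc (\<epsilon> (snd q)) (fst q)) (snd p))"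
    by (simp add: lin_scaleD[OF bilinear_map_lin_right[OF g lin_id]]
        lin_scaleD[OF bilinear_map_lin_left[OF g lin_id]] scale_mult_right)
  also have "\<dots> = (\<Sum>p\<leftarrow>R. g (fst p * (\<Sum>q\<leftarrow>R. sc (\<epsilon> (snd q)) (fst q))) (snd p))"
    by (simp add: sum_list_distrib_left linear_sum_list[OF bilinear_map_lin_left[OF g lin_id]])
  finally show ?thesis .
qed

lemma R_sum_absorb_left:
  assumes g: "bilinear_map g"
  shows "(\<Sum>p\<leftarrow>R. g (fst p) (snd p))
       = (\<Sum>p\<leftarrow>R. g (fst p) ((\<Sum>q\<leftarrow>R. sc (\<epsilon> (fst q)) (snd q)) * snd p))"
proof -
  have G: "trilinear_map (\<lambda>a b c. g (sc (\<epsilon> a) b) c)"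
    unfolding trilinear_map_def
    by (intro allI conjI bilinear_map_lin_left[OF g] bilinear_map_lin_right[OF g] lin_intros)
  have "(\<Sum>p\<leftarrow>R. g (fst p) (snd p))
      = (\<Sum>p\<leftarrow>R. g (\<Sum>q\<leftarrow>\<Delta> (fst p). sc (\<epsilon> (fst q)) (snd q)) (snd p))"
    by (simp add: counit_left)
  also have "\<dots> = (\<Sum>p\<leftarrow>R. \<Sum>q\<leftarrow>\<Delta> (fst p). g (sc (\<epsilon> (fst q)) (snd q)) (snd p))"
    by (simp add: linear_sum_list[OF bilinear_map_lin_left[OF g lin_id]])
  also have "\<dots> = (\<Sum>p\<leftarrow>R. \<Sum>q\<leftarrow>R. g (sc (\<epsilon> (fst p)) (fst q)) (snd p * snd q))"
    by (rule R_comult_left_sum[OF G])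
  also have "\<dots> = (\<Sum>q\<leftarrow>R. \<Sum>p\<leftarrow>R. g (fst q) (sc (\<epsilon> (fst p)) (snd p) * snd q))"
    by (simp add: lin_scaleD[OF bilinear_map_lin_right[OF g lin_id]]
        lin_scaleD[OF bilinear_map_lin_left[OF g lin_id]] scale_mult_left)
      (rule sum_list_swap)
  also have "\<dots> = (\<Sum>q\<leftarrow>R. g (fst q) ((\<Sum>p\<leftarrow>R. sc (\<epsilon> (fst p)) (snd p)) * snd q))"
    by (simp add: sum_list_distrib_right linear_sum_list[OF bilinear_map_lin_right[OF g lin_id]])
  finally show ?thesis .
qed

text \<open>
  By the two lemmas above, R = R (e \<otimes> 1) and R = R (1 \<otimes> e') for the counit contractions
  e, e' of R; cancelling the invertible R and applying the counit gives e = e' = 1.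
\<close>

lemma counit_R_right: "(\<Sum>p\<leftarrow>R. sc (\<epsilon> (snd p)) (fst p)) = 1"
proof -
  define e where "e = (\<Sum>p\<leftarrow>R. sc (\<epsilon> (snd p)) (fst p))"
  obtain R' where R': "teq2 sc (tmult2 R' R) [(1, 1)]"
    using R_invertible by blast
  have "e = (\<Sum>r\<leftarrow>R'. \<Sum>p\<leftarrow>R. sc (\<epsilon> (snd r * snd p)) (fst r * fst p * e))"
    using tmult2_one_sum[OF R', of "\<lambda>a b. sc (\<epsilon> b) (a * e)"]
    by (simp add: bilinear_map_def lin_intros counit_one scale_one)
  also have "\<dots> = (\<Sum>r\<leftarrow>R'. \<Sum>p\<leftarrow>R. sc (\<epsilon> (snd r * snd p)) (fst r * fst p))"
  proof (rule sum_list_cong)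
    fix r
    have g: "bilinear_map (\<lambda>a b. sc (\<epsilon> (snd r * b)) (fst r * a))"
      by (simp add: bilinear_map_def; intro allI conjI lin_intros)
    show "(\<Sum>p\<leftarrow>R. sc (\<epsilon> (snd r * snd p)) (fst r * fst p * e))
             = (\<Sum>p\<leftarrow>R. sc (\<epsilon> (snd r * snd p)) (fst r * fst p))"
      using R_sum_absorb_right[OF g] by (simp add: e_def mult.assoc)
  qed
  also have "\<dots> = 1"
    using tmult2_one_sum[OF R', of "\<lambda>a b. sc (\<epsilon> b) a"]
    by (simp add: bilinear_map_def lin_intros counit_one scale_one)
  finally show ?thesis
    unfolding e_def .
qed

lemma counit_R_left: "(\<Sum>p\<leftarrow>R. sc (\<epsilon> (fst p)) (snd p)) = 1"
proof -
  define e where "e = (\<Sum>p\<leftarrow>R. sc (\<epsilon> (fst p)) (snd p))"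
  obtain R' where R': "teq2 sc (tmult2 R R') [(1, 1)]"
    using R_invertible by blast
  have "e = (\<Sum>p\<leftarrow>R. \<Sum>r\<leftarrow>R'. sc (\<epsilon> (fst p * fst r)) (e * snd p * snd r))"
    using tmult2_one_sum[OF R', of "\<lambda>a b. sc (\<epsilon> a) (e * b)"]
    by (simp add: bilinear_map_def lin_intros counit_one scale_one mult.assoc)
  also have "\<dots> = (\<Sum>r\<leftarrow>R'. \<Sum>p\<leftarrow>R. sc (\<epsilon> (fst p * fst r)) (e * snd p * snd r))"
    by (rule sum_list_swap)
  also have "\<dots> = (\<Sum>r\<leftarrow>R'. \<Sum>p\<leftarrow>R. sc (\<epsilon> (fst p * fst r)) (snd p * snd r))"
  proof (rule sum_list_cong)
    fix r
    have g: "bilinear_map (\<lambda>a b. sc (\<epsilon> (a * fst r)) (b * snd r))"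
      by (simp add: bilinear_map_def; intro allI conjI lin_intros)
    show "(\<Sum>p\<leftarrow>R. sc (\<epsilon> (fst p * fst r)) (e * snd p * snd r))
             = (\<Sum>p\<leftarrow>R. sc (\<epsilon> (fst p * fst r)) (snd p * snd r))"
      using R_sum_absorb_left[OF g] by (simp add: e_def mult.assoc)
  qed
  also have "\<dots> = 1"
    using tmult2_one_sum[OF R', of "\<lambda>a b. sc (\<epsilon> a) b"] sum_list_swap[where xs=R and ys=R' and f="\<lambda>p r. sc (\<epsilon> (fst p * fst r)) (snd p * snd r)"]
    by (simp add: bilinear_map_def lin_intros counit_one scale_one)
  finally show ?thesis
    unfolding e_def .
qed

lemma comult_antipode_first_sum:
  assumes F: "bilinear_map F"
  shows "(\<Sum>q\<leftarrow>\<Delta> m. \<Sum>s\<leftarrow>\<Delta> (fst q). F (fst s * S (snd s)) (snd q)) = F 1 m"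
proof -
  have "(\<Sum>q\<leftarrow>\<Delta> m. \<Sum>s\<leftarrow>\<Delta> (fst q). F (fst s * S (snd s)) (snd q))
      = (\<Sum>q\<leftarrow>\<Delta> m. F (\<Sum>s\<leftarrow>\<Delta> (fst q). fst s * S (snd s)) (snd q))"
    by (simp add: linear_sum_list[OF bilinear_map_lin_left[OF F lin_id]])
  also have "\<dots> = (\<Sum>q\<leftarrow>\<Delta> m. F 1 (sc (\<epsilon> (fst q)) (snd q)))"
    by (simp add: antipode_right lin_scaleD[OF bilinear_map_lin_left[OF F lin_id]]
        lin_scaleD[OF bilinear_map_lin_right[OF F lin_id]])
  also have "\<dots> = F 1 m"
    by (simp add: linear_sum_list[OF bilinear_map_lin_right[OF F lin_id], symmetric] counit_left)
  finally show ?thesis .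
qed

lemma comult_antipode_second_sum:
  assumes F: "bilinear_map F"
  shows "(\<Sum>t\<leftarrow>\<Delta> h. \<Sum>s\<leftarrow>\<Delta> (snd t). F (fst t) (fst s * S (snd s))) = F h 1"
proof -
  have "(\<Sum>t\<leftarrow>\<Delta> h. \<Sum>s\<leftarrow>\<Delta> (snd t). F (fst t) (fst s * S (snd s)))
      = (\<Sum>t\<leftarrow>\<Delta> h. F (fst t) (\<Sum>s\<leftarrow>\<Delta> (snd t). fst s * S (snd s)))"
    by (simp add: linear_sum_list[OF bilinear_map_lin_right[OF F lin_id]])
  also have "\<dots> = (\<Sum>t\<leftarrow>\<Delta> h. F (sc (\<epsilon> (snd t)) (fst t)) 1)"
    by (simp add: antipode_right lin_scaleD[OF bilinear_map_lin_left[OF F lin_id]]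
        lin_scaleD[OF bilinear_map_lin_right[OF F lin_id]])
  also have "\<dots> = F h 1"
    by (simp add: linear_sum_list[OF bilinear_map_lin_left[OF F lin_id], symmetric] counit_right)
  finally show ?thesis .
qed

abbreviation u :: 'h where
  "u \<equiv> drinfeld_u S R"

lemma drinfeld_u_sum: "u = (\<Sum>p\<leftarrow>R. S (snd p) * fst p)"
  by (simp add: drinfeld_u_def case_prod_beta')

lemma sum_R2_u_R1: "(\<Sum>p\<leftarrow>R. snd p * u * fst p) = 1"
proof -
  have G: "trilinear_map (\<lambda>a b c. b * S c * a)"
    unfolding trilinear_map_def by (intro allI conjI lin_intros)
  have "1 = (\<Sum>p\<leftarrow>R. \<Sum>q\<leftarrow>\<Delta> (snd p). fst q * S (snd q) * fst p)"
    by (simp add: sum_list_mult_const antipode_right scale_mult_left scale_one counit_R_right)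
  also have "\<dots> = (\<Sum>p\<leftarrow>R. \<Sum>q\<leftarrow>R. snd q * S (snd p) * (fst p * fst q))"
    by (rule R_comult_right_sum[OF G])
  also have "\<dots> = (\<Sum>p\<leftarrow>R. snd p * u * fst p)"
    unfolding drinfeld_u_sum
    by (simp add: sum_list_distrib_left sum_list_distrib_right mult.assoc) (rule sum_list_swap)
  finally show ?thesis ..
qed

lemma sum_S_R2_u_S_R1: "(\<Sum>p\<leftarrow>R. S (snd p) * u * S (fst p)) = 1"
proof -
  have G: "trilinear_map (\<lambda>a b c. S c * a * S b)"
    unfolding trilinear_map_def by (intro allI conjI lin_intros)
  have "1 = (\<Sum>p\<leftarrow>R. \<Sum>q\<leftarrow>\<Delta> (fst p). S (snd p) * fst q * S (snd q))"
    by (simp add: sum_list_const_mult mult.assoc antipode_right scale_mult_right scale_one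
        S_scale[symmetric] S_sum_list[symmetric] counit_R_left S_one)
  also have "\<dots> = (\<Sum>p\<leftarrow>R. \<Sum>q\<leftarrow>R. S (snd p * snd q) * fst p * S (fst q))"
    by (rule R_comult_left_sum[OF G])
  also have "\<dots> = (\<Sum>p\<leftarrow>R. S (snd p) * u * S (fst p))"
    unfolding drinfeld_u_sum
    by (simp add: sum_list_distrib_left sum_list_distrib_right mult.assoc S_mult) (rule sum_list_swap)
  finally show ?thesis ..
qed

lemma nu_sum:
  "(\<Sum>p\<leftarrow>nu \<Delta> S R h. (g (fst p) (snd p) :: 'h)) =
   (\<Sum>t\<leftarrow>\<Delta> h. \<Sum>s\<leftarrow>\<Delta> (fst t). \<Sum>a\<leftarrow>R. \<Sum>c\<leftarrow>R.
      g (snd a * snd s * snd c) (S (fst s) * S (fst a) * snd t * fst c))"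
proof -
  have "(\<Sum>p\<leftarrow>nu \<Delta> S R h. g (fst p) (snd p)) =
   (\<Sum>a\<leftarrow>R. \<Sum>t\<leftarrow>\<Delta> h. \<Sum>s\<leftarrow>\<Delta> (fst t). \<Sum>c\<leftarrow>R.
      g (snd a * snd s * snd c) (S (fst s) * S (fst a) * snd t * fst c))"
    by (simp add: nu_def Delta2_def map_concat sum_list_concat comp_def split_def)
  also have "\<dots> = (\<Sum>t\<leftarrow>\<Delta> h. \<Sum>a\<leftarrow>R. \<Sum>s\<leftarrow>\<Delta> (fst t). \<Sum>c\<leftarrow>R.
      g (snd a * snd s * snd c) (S (fst s) * S (fst a) * snd t * fst c))"
    by (rule sum_list_swap)
  also have "\<dots> = (\<Sum>t\<leftarrow>\<Delta> h. \<Sum>s\<leftarrow>\<Delta> (fst t). \<Sum>a\<leftarrow>R. \<Sum>c\<leftarrow>R.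
      g (snd a * snd s * snd c) (S (fst s) * S (fst a) * snd t * fst c))"
    by (rule sum_list_cong, rule sum_list_swap)
  finally show ?thesis .
qed

lemma nu_alt_sum:
  assumes "bilinear_map g"
  shows "(\<Sum>p\<leftarrow>nu \<Delta> S R h. g (fst p) (snd p)) =
   (\<Sum>t\<leftarrow>\<Delta> h. \<Sum>s\<leftarrow>\<Delta> (fst t). \<Sum>a\<leftarrow>R. \<Sum>c\<leftarrow>R.
      g (fst a * snd s * fst c) (S (snd c) * S (fst s) * snd a * snd t))"
proof -
  have "(\<Sum>p\<leftarrow>nu \<Delta> S R h. g (fst p) (snd p)) =
   (\<Sum>a\<leftarrow>R. \<Sum>t\<leftarrow>\<Delta> h. \<Sum>s\<leftarrow>\<Delta> (fst t). \<Sum>c\<leftarrow>R.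
      g (fst a * snd s * fst c) (S (snd c) * S (fst s) * snd a * snd t))"
    using teq2_sum_eq[OF nu_alt assms]
    by (simp add: Delta2_def map_concat sum_list_concat comp_def split_def)
  also have "\<dots> = (\<Sum>t\<leftarrow>\<Delta> h. \<Sum>a\<leftarrow>R. \<Sum>s\<leftarrow>\<Delta> (fst t). \<Sum>c\<leftarrow>R.
      g (fst a * snd s * fst c) (S (snd c) * S (fst s) * snd a * snd t))"
    by (rule sum_list_swap)
  also have "\<dots> = (\<Sum>t\<leftarrow>\<Delta> h. \<Sum>s\<leftarrow>\<Delta> (fst t). \<Sum>a\<leftarrow>R. \<Sum>c\<leftarrow>R.
      g (fst a * snd s * fst c) (S (snd c) * S (fst s) * snd a * snd t))"
    by (rule sum_list_cong, rule sum_list_swap)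
  finally show ?thesis .
qed

lemma nu_sum_cong_center:
  assumes "bilinear_map g1" "bilinear_map g2" "\<And>x z. z \<in> center \<Longrightarrow> g1 x z = g2 x z"
  shows "(\<Sum>p\<leftarrow>nu \<Delta> S R h. g1 (fst p) (snd p)) = (\<Sum>p\<leftarrow>nu \<Delta> S R h. g2 (fst p) (snd p))"
proof -
  obtain ys where eq: "teq2 sc (nu \<Delta> S R h) ys" and central: "\<forall>(a, z)\<in>set ys. z \<in> center"
    using nu_central[of h] unfolding in_H_ZH_def by blast
  have "(\<Sum>p\<leftarrow>ys. g1 (fst p) (snd p)) = (\<Sum>p\<leftarrow>ys. g2 (fst p) (snd p))"
    by (rule sum_list_cong) (use central assms(3) in auto)
  then show ?thesis
    using teq2_sum_eq[OF eq assms(1)] teq2_sum_eq[OF eq assms(2)] by simp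
qed

definition T :: "'h \<Rightarrow> 'h" where
  "T h = mu (nu \<Delta> S R h)"

lemma T_sum: "T h = (\<Sum>p\<leftarrow>nu \<Delta> S R h. fst p * snd p)"
  by (simp add: T_def mu_def case_prod_beta')

lemma lin_T: "lin T"
proof -
  have "lin (\<lambda>h. \<Sum>t\<leftarrow>\<Delta> h. \<Sum>s\<leftarrow>\<Delta> (fst t). \<Sum>a\<leftarrow>R. \<Sum>c\<leftarrow>R.
      (snd a * snd s * snd c) * (S (fst s) * S (fst a) * snd t * fst c))"
    by (intro lin_comult_intros | simp only: prod.sel)+
  then show ?thesis
    unfolding T_sum nu_sum[of "\<lambda>x z. x * z"] by simp
qed

lemmas lin_T_intros = lin_comult_intros lin_inv_S[THEN lin_comp] lin_T[THEN lin_comp]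

lemma S_u_T_expand:
  "S w * u * T x = (\<Sum>t\<leftarrow>\<Delta> x. \<Sum>s\<leftarrow>\<Delta> (fst t). \<Sum>a\<leftarrow>R. \<Sum>c\<leftarrow>R.
      S (snd c) * S (fst s) * snd a * (snd t * S w) * u * (fst a * snd s * fst c))"
proof -
  have g: "bilinear_map (\<lambda>a b. b * S w * u * a)"
    unfolding bilinear_map_def by (intro allI conjI lin_intros)
  have "S w * u * T x = (\<Sum>p\<leftarrow>nu \<Delta> S R x. S w * u * (fst p * snd p))"
    by (simp add: T_sum sum_list_distrib_left)
  also have "\<dots> = (\<Sum>p\<leftarrow>nu \<Delta> S R x. snd p * S w * u * fst p)"
  proof (rule nu_sum_cong_center[OF _ g])
    show "bilinear_map (\<lambda>a b. S w * u * (a * b))"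
      unfolding bilinear_map_def by (intro allI conjI lin_intros)
    show "z \<in> center \<Longrightarrow> S w * u * (y * z) = z * S w * u * y" for y z
      using center_commute[of z "S w * u * y"] by (simp add: mult.assoc)
  qed
  also have "\<dots> = (\<Sum>t\<leftarrow>\<Delta> x. \<Sum>s\<leftarrow>\<Delta> (fst t). \<Sum>a\<leftarrow>R. \<Sum>c\<leftarrow>R.
      (S (snd c) * S (fst s) * snd a * snd t) * S w * u * (fst a * snd s * fst c))"
    by (rule nu_alt_sum[OF g])
  finally show ?thesis
    by (simp add: mult.assoc)
qed

lemma sum_R_S_R2_u_R1:
  "(\<Sum>s\<leftarrow>\<Delta> x. \<Sum>a\<leftarrow>R. \<Sum>c\<leftarrow>R. S (snd c) * S (fst s) * snd a * u * (fst a * snd s * fst c))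
   = sc (\<epsilon> x) u"
proof -
  let ?f = "\<lambda>s m. \<Sum>c\<leftarrow>R. S (snd c) * S (fst s) * m * snd s * fst c"
  have "(\<Sum>s\<leftarrow>\<Delta> x. \<Sum>a\<leftarrow>R. \<Sum>c\<leftarrow>R. S (snd c) * S (fst s) * snd a * u * (fst a * snd s * fst c))
      = (\<Sum>s\<leftarrow>\<Delta> x. \<Sum>a\<leftarrow>R. ?f s (snd a * u * fst a))"
    by (simp add: mult.assoc)
  also have "\<dots> = (\<Sum>s\<leftarrow>\<Delta> x. ?f s (\<Sum>a\<leftarrow>R. snd a * u * fst a))"
    by (rule sum_list_cong, rule linear_sum_list[OF lin_sum_list, symmetric]) (intro lin_intros)
  also have "\<dots> = (\<Sum>s\<leftarrow>\<Delta> x. \<Sum>c\<leftarrow>R. S (snd c) * S (fst s) * snd s * fst c)"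
    by (simp only: sum_R2_u_R1) (simp add: mult.assoc)
  also have "\<dots> = (\<Sum>c\<leftarrow>R. S (snd c) * (\<Sum>s\<leftarrow>\<Delta> x. S (fst s) * snd s) * fst c)"
    by (simp add: sum_list_distrib_left sum_list_distrib_right mult.assoc) (rule sum_list_swap)
  also have "\<dots> = sc (\<epsilon> x) u"
    by (simp add: antipode_left drinfeld_u_sum scale_mult_left scale_mult_right scale_sum_list)
  finally show ?thesis .
qed

lemma sum_S_u_T_comult: "(\<Sum>t\<leftarrow>\<Delta> h. S (snd t) * u * T (fst t)) = sc (\<epsilon> h) u"
proof -
  let ?G = "\<lambda>x m. \<Sum>s\<leftarrow>\<Delta> x. \<Sum>a\<leftarrow>R. \<Sum>c\<leftarrow>R.
      S (snd c) * S (fst s) * snd a * m * u * (fst a * snd s * fst c)"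
  have G3: "trilinear_map (\<lambda>a b c. ?G a (b * S c))"
    unfolding trilinear_map_def by (intro allI conjI; (intro lin_T_intros | simp only: prod.sel)+)
  have G2: "bilinear_map ?G"
    unfolding bilinear_map_def by (intro allI conjI; (intro lin_T_intros | simp only: prod.sel)+)
  have "(\<Sum>t\<leftarrow>\<Delta> h. S (snd t) * u * T (fst t))
      = (\<Sum>t\<leftarrow>\<Delta> h. \<Sum>t'\<leftarrow>\<Delta> (fst t). ?G (fst t') (snd t' * S (snd t)))"
    by (simp only: S_u_T_expand)
  also have "\<dots> = (\<Sum>t\<leftarrow>\<Delta> h. \<Sum>t'\<leftarrow>\<Delta> (snd t). ?G (fst t) (fst t' * S (snd t')))"
    by (rule coassoc_sum[OF G3])
  also have "\<dots> = ?G h 1"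
    by (rule comult_antipode_second_sum[OF G2])
  finally show ?thesis
    using sum_R_S_R2_u_R1[of h] by simp
qed

lemma u_T: "u * T h = S (S h) * u"
proof -
  have G3: "trilinear_map (\<lambda>a b c. S (S c) * S b * u * T a)"
    unfolding trilinear_map_def by (intro allI conjI; (intro lin_T_intros | simp only: prod.sel)+)
  have G2: "bilinear_map (\<lambda>a m. S m * u * T a)"
    unfolding bilinear_map_def by (intro allI conjI lin_T_intros)
  have "S (S h) * u = (\<Sum>t\<leftarrow>\<Delta> h. S (S (sc (\<epsilon> (fst t)) (snd t))) * u)"
    by (subst (1) counit_left[symmetric, of h])
      (rule linear_sum_list[OF lin_mult_right[OF lin_S_comp[OF lin_S]]])
  also have "\<dots> = (\<Sum>t\<leftarrow>\<Delta> h. S (S (snd t)) * (\<Sum>t'\<leftarrow>\<Delta> (fst t). S (snd t') * u * T (fst t')))"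
    by (simp add: sum_S_u_T_comult S_scale scale_mult_left scale_mult_right)
  also have "\<dots> = (\<Sum>t\<leftarrow>\<Delta> h. \<Sum>t'\<leftarrow>\<Delta> (fst t). S (S (snd t)) * S (snd t') * u * T (fst t'))"
    by (simp add: sum_list_distrib_left mult.assoc)
  also have "\<dots> = (\<Sum>t\<leftarrow>\<Delta> h. \<Sum>t'\<leftarrow>\<Delta> (snd t). S (S (snd t')) * S (fst t') * u * T (fst t))"
    by (rule coassoc_sum[OF G3])
  also have "\<dots> = (\<Sum>t\<leftarrow>\<Delta> h. \<Sum>t'\<leftarrow>\<Delta> (snd t). S (fst t' * S (snd t')) * u * T (fst t))"
    by (simp add: S_mult)
  also have "\<dots> = S 1 * u * T h"
    by (rule comult_antipode_second_sum[OF G2])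
  finally show ?thesis
    by (simp add: S_one)
qed

definition V :: "'h \<Rightarrow> 'h" where
  "V h = (\<Sum>p\<leftarrow>nu \<Delta> S R h. S (fst p) * snd p)"

lemma lin_V: "lin V"
proof -
  have "lin (\<lambda>h. \<Sum>t\<leftarrow>\<Delta> h. \<Sum>s\<leftarrow>\<Delta> (fst t). \<Sum>a\<leftarrow>R. \<Sum>c\<leftarrow>R.
      S (snd a * snd s * snd c) * (S (fst s) * S (fst a) * snd t * fst c))"
    by (simp only: S_mult; (intro lin_comult_intros | simp only: prod.sel)+)
  then show ?thesis
    unfolding V_def nu_sum[of "\<lambda>x z. S x * z"] by simp
qed

lemma V_u_expand:
  "V w * u * y = (\<Sum>t\<leftarrow>\<Delta> w. \<Sum>s\<leftarrow>\<Delta> (fst t). \<Sum>a\<leftarrow>R. \<Sum>c\<leftarrow>R.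
      S (snd a * snd s * snd c) * u * (y * S (fst s)) * (S (fst a) * snd t * fst c))"
proof -
  have "V w * u * y = (\<Sum>p\<leftarrow>nu \<Delta> S R w. S (fst p) * snd p * u * y)"
    by (simp add: V_def sum_list_distrib_right)
  also have "\<dots> = (\<Sum>p\<leftarrow>nu \<Delta> S R w. S (fst p) * u * y * snd p)"
  proof (rule nu_sum_cong_center)
    show "bilinear_map (\<lambda>a b. S a * b * u * y)" "bilinear_map (\<lambda>a b. S a * u * y * b)"
      unfolding bilinear_map_def by (intro allI conjI lin_intros)+
    show "z \<in> center \<Longrightarrow> S x * z * u * y = S x * u * y * z" for x z
      using center_commute[of z "u * y"] by (simp add: mult.assoc)
  qed
  also have "\<dots> = (\<Sum>t\<leftarrow>\<Delta> w. \<Sum>s\<leftarrow>\<Delta> (fst t). \<Sum>a\<leftarrow>R. \<Sum>c\<leftarrow>R.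
      S (snd a * snd s * snd c) * u * y * (S (fst s) * S (fst a) * snd t * fst c))"
    by (rule nu_sum)
  finally show ?thesis
    by (simp add: mult.assoc S_mult)
qed

lemma sum_R_S_u_S:
  "(\<Sum>a\<leftarrow>R. \<Sum>c\<leftarrow>R. S (snd a * g * snd c) * u * (S (fst a) * w * fst c))
   = (\<Sum>c\<leftarrow>R. S (snd c) * S g * w * fst c)"
proof -
  let ?f = "\<lambda>m. \<Sum>c\<leftarrow>R. S (snd c) * S g * m * w * fst c"
  have "(\<Sum>a\<leftarrow>R. \<Sum>c\<leftarrow>R. S (snd a * g * snd c) * u * (S (fst a) * w * fst c))
      = (\<Sum>a\<leftarrow>R. ?f (S (snd a) * u * S (fst a)))"
    by (simp add: S_mult mult.assoc)
  also have "\<dots> = ?f (\<Sum>a\<leftarrow>R. S (snd a) * u * S (fst a))"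
    by (rule linear_sum_list[OF lin_sum_list, symmetric]) (intro lin_intros)
  finally show ?thesis
    by (simp only: sum_S_R2_u_S_R1) (simp add: mult.assoc)
qed

lemma sum_V_u_comult: "(\<Sum>t\<leftarrow>\<Delta> h. V (snd t) * u * fst t) = sc (\<epsilon> h) u"
proof -
  let ?F = "\<lambda>m g2 g3. \<Sum>a\<leftarrow>R. \<Sum>c\<leftarrow>R. S (snd a * g2 * snd c) * u * m * (S (fst a) * g3 * fst c)"
  let ?K = "\<lambda>y x g3. \<Sum>s\<leftarrow>\<Delta> x. ?F (y * S (fst s)) (snd s) g3"
  have K: "trilinear_map ?K"
    unfolding trilinear_map_def
    by (simp only: S_mult; intro allI conjI; (intro lin_comult_intros | simp only: prod.sel)+)
  have F3: "trilinear_map (\<lambda>a b c. ?F (a * S b) c w)" for w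
    unfolding trilinear_map_def
    by (simp only: S_mult; intro allI conjI; (intro lin_comult_intros | simp only: prod.sel)+)
  have F2: "bilinear_map (\<lambda>m g. ?F m g w)" for w
    unfolding bilinear_map_def
    by (simp only: S_mult; intro allI conjI; (intro lin_comult_intros | simp only: prod.sel)+)
  have "(\<Sum>t\<leftarrow>\<Delta> h. V (snd t) * u * fst t)
      = (\<Sum>t\<leftarrow>\<Delta> h. \<Sum>t'\<leftarrow>\<Delta> (snd t). ?K (fst t) (fst t') (snd t'))"
    by (simp only: V_u_expand)
  also have "\<dots> = (\<Sum>t\<leftarrow>\<Delta> h. \<Sum>t'\<leftarrow>\<Delta> (fst t). ?K (fst t') (snd t') (snd t))"
    by (rule coassoc_sum[OF K, symmetric])
  also have "\<dots> = (\<Sum>t\<leftarrow>\<Delta> h. \<Sum>q\<leftarrow>\<Delta> (fst t). \<Sum>s\<leftarrow>\<Delta> (fst q). ?F (fst s * S (snd s)) (snd q) (snd t))"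
    by (rule sum_list_cong, rule coassoc_sum[OF F3, symmetric])
  also have "\<dots> = (\<Sum>t\<leftarrow>\<Delta> h. ?F 1 (fst t) (snd t))"
    by (simp only: comult_antipode_first_sum[OF F2])
  also have "\<dots> = (\<Sum>t\<leftarrow>\<Delta> h. \<Sum>c\<leftarrow>R. S (snd c) * S (fst t) * snd t * fst c)"
    by (simp only: mult_1_right sum_R_S_u_S)
  also have "\<dots> = (\<Sum>c\<leftarrow>R. S (snd c) * (\<Sum>t\<leftarrow>\<Delta> h. S (fst t) * snd t) * fst c)"
    by (simp add: sum_list_distrib_left sum_list_distrib_right mult.assoc) (rule sum_list_swap)
  also have "\<dots> = sc (\<epsilon> h) u"
    by (simp add: antipode_left drinfeld_u_sum scale_mult_left scale_mult_right scale_sum_list)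
  finally show ?thesis .
qed

lemma V_u: "V h * u = u * inv S h"
proof -
  have G: "trilinear_map (\<lambda>a b c. V c * u * b * inv S a)"
    unfolding trilinear_map_def
    by (intro allI conjI; (intro lin_T_intros lin_V[THEN lin_comp] | simp only: prod.sel)+)
  have "u * inv S h = (\<Sum>t\<leftarrow>\<Delta> h. u * inv S (sc (\<epsilon> (snd t)) (fst t)))"
    by (subst (1) counit_right[symmetric, of h])
      (rule linear_sum_list[OF lin_mult_left[OF lin_inv_S]])
  also have "\<dots> = (\<Sum>t\<leftarrow>\<Delta> h. (\<Sum>t'\<leftarrow>\<Delta> (snd t). V (snd t') * u * fst t') * inv S (fst t))"
    by (simp add: sum_V_u_comult lin_scaleD[OF lin_inv_S] scale_mult_left scale_mult_right)
  also have "\<dots> = (\<Sum>t\<leftarrow>\<Delta> h. \<Sum>t'\<leftarrow>\<Delta> (snd t). V (snd t') * u * fst t' * inv S (fst t))"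
    by (simp add: sum_list_distrib_right)
  also have "\<dots> = (\<Sum>t\<leftarrow>\<Delta> h. \<Sum>t'\<leftarrow>\<Delta> (fst t). V (snd t) * u * snd t' * inv S (fst t'))"
    by (rule coassoc_sum[OF G, symmetric])
  also have "\<dots> = (\<Sum>t\<leftarrow>\<Delta> h. V (snd t) * u * (\<Sum>t'\<leftarrow>\<Delta> (fst t). snd t' * inv S (fst t')))"
    by (simp add: sum_list_const_mult mult.assoc)
  also have "\<dots> = (\<Sum>t\<leftarrow>\<Delta> h. V (sc (\<epsilon> (fst t)) (snd t)) * u)"
    by (simp add: antipode_inv_S lin_scaleD[OF lin_V] scale_mult_left scale_mult_right)
  also have "\<dots> = V h * u"
    by (subst (2) counit_left[symmetric, of h])
      (rule linear_sum_list[OF lin_mult_right[OF lin_V], symmetric])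
  finally show ?thesis ..
qed

text \<open>
  u_inv is a right inverse of u by u_T; by V_u, V(S u_inv) is a left inverse, so the two agree.
\<close>

definition u_inv :: 'h where
  "u_inv = (\<Sum>p\<leftarrow>R. T (inv S (inv S (snd p))) * fst p)"

lemma u_u_inv: "u * u_inv = 1"
  unfolding u_inv_def
  by (simp add: sum_list_distrib_left mult.assoc[symmetric] u_T S_inv_S sum_R2_u_R1)

lemma u_inv_u: "u_inv * u = 1"
proof -
  have V_u_inv: "V (S u_inv) * u = 1"
    by (simp add: V_u inv_S_S u_u_inv)
  have "u_inv = V (S u_inv) * u * u_inv"
    by (simp add: V_u_inv)
  also have "\<dots> = V (S u_inv)"
    by (simp add: mult.assoc u_u_inv)
  finally show ?thesis
    using V_u_inv by simp
qed

lemma T_conj: "T h = u_inv * S (S h) * u"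
proof -
  have "T h = u_inv * (u * T h)"
    by (simp add: mult.assoc[symmetric] u_inv_u)
  then show ?thesis
    by (simp add: u_T mult.assoc)
qed

lemma mu_SS_nu_inv_S: "mu (SS S (nu \<Delta> S R (inv S h))) = S (T (inv S h))"
proof -
  have "mu (SS S (nu \<Delta> S R (inv S h))) = S (\<Sum>p\<leftarrow>nu \<Delta> S R (inv S h). snd p * fst p)"
    by (simp add: mu_def SS_def comp_def case_prod_beta' S_mult S_sum_list)
  also have "(\<Sum>p\<leftarrow>nu \<Delta> S R (inv S h). snd p * fst p) = (\<Sum>p\<leftarrow>nu \<Delta> S R (inv S h). fst p * snd p)"
    by (rule nu_sum_cong_center)
      (auto simp: bilinear_map_def lin_intros center_commute)
  finally show ?thesis
    by (simp add: T_sum)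
qed

end

theorem proposition3p6:
  fixes sc :: "'k::field \<Rightarrow> 'h::ring_1 \<Rightarrow> 'h"
    and \<Delta> :: "'h \<Rightarrow> ('h \<times> 'h) list"
    and \<epsilon> :: "'h \<Rightarrow> 'k"
    and S :: "'h \<Rightarrow> 'h"
    and R :: "('h \<times> 'h) list"
  assumes "semiquasitriangular sc \<Delta> \<epsilon> S R"
  defines "T \<equiv> \<lambda>h. mu (nu \<Delta> S R h)"
    and "u \<equiv> drinfeld_u S R"
  shows "(S u * u \<in> center \<longleftrightarrow> S \<circ> T = T \<circ> S)
       \<and> (S \<circ> T = T \<circ> S \<longleftrightarrow> T = (\<lambda>h. mu (SS S (nu \<Delta> S R (inv S h)))))"
proof -
  interpret H: semiquasitriangular_hopf sc \<Delta> \<epsilon> S R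
    by unfold_locales (fact assms(1))
  have T_eq: "T = H.T"
    by (simp add: T_def H.T_def fun_eq_iff)
  have T_conj: "T = (\<lambda>h. H.u_inv * S (S h) * u)"
    by (simp add: T_eq H.T_conj u_def fun_eq_iff)
  have "S \<circ> T = T \<circ> S \<longleftrightarrow> S u * u \<in> center"
    unfolding T_conj u_def
    by (rule antimult_commute_conj_iff_center[OF bij_is_surj[OF H.bij_S] H.S_mult H.S_one
          H.u_u_inv H.u_inv_u])
  moreover have "(\<lambda>h. mu (SS S (nu \<Delta> S R (inv S h)))) = (\<lambda>h. S (T (inv S h)))"
    by (simp add: T_eq H.mu_SS_nu_inv_S)
  ultimately show ?thesis
    using commute_iff_eq_conj[OF H.bij_S, of T] by simp
qed

end
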